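(* For every $m\geq 1$, $\mathrm{capt}(T_{m+1},m)=4m-2$.
   Context: The subdivided star $T_n$ is obtained from the star $K_{1,n}$ by adding $n$ new vertices and joining each new vertex to a distinct leaf of the star (so $T_n$ has $2n+1$ vertices and diameter $4$ for $n\geq 2$). All graphs are reflexive (a player may stay in place). The game of $k$ cops and $m$ robbers on $G$: in round 0 the cops first choose starting vertices, then the robbers choose theirs. In each round $i\geq 1$, all cops move (each to an adjacent vertex or staying), then all robbers move likewise. Several players may occupy the same vertex. Whenever a cop and some robbers occupy the same vertex, those robbers are captured and take no further part in the game. Both sides have full information. The cops win if all robbers are captured after finitely many rounds. For a cop-win graph $G$, $\mathrm{capt}(G,m)$ is the index of the round in which the last robber is captured when one cop plays to minimize this index and $m$ robbers play to maximize it. *)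

theory Defs
  imports Main
begin

text \<open>Subdivided star T_n on vertices 0..2n: centre 0, leaves 1..n of the star,
  new vertex i+n attached to leaf i. Adjacency is reflexive (players may stay).\<close>

definition tstar_V :: "nat \<Rightarrow> nat set" where
  "tstar_V n = {0..2*n}"

definition tstar_adj :: "nat \<Rightarrow> nat \<Rightarrow> nat \<Rightarrow> bool" where
  "tstar_adj n u v \<longleftrightarrow> u = v
     \<or> (u = 0 \<and> 1 \<le> v \<and> v \<le> n) \<or> (v = 0 \<and> 1 \<le> u \<and> u \<le> n)
     \<or> (1 \<le> u \<and> u \<le> n \<and> v = u + n) \<or> (1 \<le> v \<and> v \<le> n \<and> u = v + n)"

text \<open>Robber positions: a list of length m, None = already captured.\<close>

definition capture :: "'v \<Rightarrow> 'v option list \<Rightarrow> 'v option list" where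
  "capture c rs = map (\<lambda>r. if r = Some c then None else r) rs"

definition robber_moves :: "'v set \<Rightarrow> ('v \<Rightarrow> 'v \<Rightarrow> bool) \<Rightarrow> 'v option list \<Rightarrow> 'v option list \<Rightarrow> bool" where
  "robber_moves V adj rs rs' \<longleftrightarrow> length rs' = length rs \<and>
     (\<forall>i<length rs. (rs ! i = None \<longrightarrow> rs' ! i = None) \<and>
        (\<forall>x. rs ! i = Some x \<longrightarrow> (\<exists>y\<in>V. adj x y \<and> rs' ! i = Some y)))"

text \<open>cop_wins_within V adj j c rs: from the position at the end of a round
  (cop on c, robbers rs), the cop can force that all robbers are captured
  within at most j further rounds.\<close>

fun cop_wins_within :: "'v set \<Rightarrow> ('v \<Rightarrow> 'v \<Rightarrow> bool) \<Rightarrow> nat \<Rightarrow> 'v \<Rightarrow> 'v option list \<Rightarrow> bool" where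
  "cop_wins_within V adj 0 c rs = (\<forall>r\<in>set rs. r = None)"
| "cop_wins_within V adj (Suc j) c rs =
     ((\<forall>r\<in>set rs. r = None) \<or>
      (\<exists>c'\<in>V. adj c c' \<and>
         (\<forall>rs'. robber_moves V adj (capture c' rs) rs' \<longrightarrow>
                cop_wins_within V adj j c' (capture c' rs'))))"

text \<open>One cop can force capture of all m robbers by round k (round 0 = placement).\<close>

definition capt_by :: "'v set \<Rightarrow> ('v \<Rightarrow> 'v \<Rightarrow> bool) \<Rightarrow> nat \<Rightarrow> nat \<Rightarrow> bool" where
  "capt_by V adj m k \<longleftrightarrow>
     (\<exists>c0\<in>V. \<forall>rs. length rs = m \<and> set rs \<subseteq> V \<longrightarrow>
        cop_wins_within V adj k c0 (capture c0 (map Some rs)))"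

definition capt :: "'v set \<Rightarrow> ('v \<Rightarrow> 'v \<Rightarrow> bool) \<Rightarrow> nat \<Rightarrow> nat" where
  "capt V adj m = (LEAST k. capt_by V adj m k)"

end

theory Submission
  imports Defs
begin

(* Upper bound: the cop starts at the centre and repeatedly walks to the leaf on the branch of
   some remaining robber and on to its tip. A robber on that branch cannot escape and is caught
   within these two rounds, after which two rounds bring the cop back to the centre. Each robber
   but the last thus costs four rounds, the last one two.
   Lower bound: with m + 1 branches, the robbers sit still on the m tips outside the branch where
   the cop starts. The distance from the cop to the nearest robber is at least 2 initially, drops
   by at most one per round, and is 4 again after every capture but the last. *)

definition alive :: "'v option list \<Rightarrow> nat set" where
  "alive rs = {i. i < length rs \<and> rs ! i \<noteq> None}"

definition occupied :: "'v option list \<Rightarrow> 'v set" where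
  "occupied rs = {x. Some x \<in> set rs}"

lemma finite_alive: "finite (alive rs)"
  unfolding alive_def by simp

lemma card_alive_le_length: "card (alive rs) \<le> length rs"
  using card_mono[of "{..<length rs}" "alive rs"] unfolding alive_def by auto

lemma alive_empty_iff: "alive rs = {} \<longleftrightarrow> (\<forall>r\<in>set rs. r = None)"
  unfolding alive_def by (force simp: in_set_conv_nth)

lemma cop_wins_within_all_captured: "\<forall>r\<in>set rs. r = None \<Longrightarrow> cop_wins_within V adj j c rs"
  by (cases j) auto

lemma length_capture [simp]: "length (capture c rs) = length rs"
  by (simp add: capture_def)

lemma nth_capture: "i < length rs \<Longrightarrow> capture c rs ! i = (if rs ! i = Some c then None else rs ! i)"
  by (simp add: capture_def)

lemma capture_capture [simp]: "capture c (capture c rs) = capture c rs"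
  by (induct rs) (auto simp: capture_def)

lemma capture_map_Some: "c \<notin> set xs \<Longrightarrow> capture c (map Some xs) = map Some xs"
  by (induct xs) (auto simp: capture_def)

lemma alive_capture_subset: "alive (capture c rs) \<subseteq> alive rs"
  unfolding alive_def by (auto simp: nth_capture split: if_splits)

lemma occupied_capture [simp]: "occupied (capture c rs) = occupied rs - {c}"
  unfolding occupied_def capture_def by (auto split: if_splits)

lemma occupied_map_Some [simp]: "occupied (map Some xs) = set xs"
  unfolding occupied_def by auto

lemma robber_moves_length: "robber_moves V adj rs rs' \<Longrightarrow> length rs' = length rs"
  by (simp add: robber_moves_def)

lemma robber_movesD:
  "robber_moves V adj rs rs' \<Longrightarrow> i < length rs \<Longrightarrow> rs ! i = Some x \<Longrightarrow> \<exists>y\<in>V. adj x y \<and> rs' ! i = Some y"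
  unfolding robber_moves_def by blast

lemma robber_moves_None: "robber_moves V adj rs rs' \<Longrightarrow> i < length rs \<Longrightarrow> rs ! i = None \<Longrightarrow> rs' ! i = None"
  unfolding robber_moves_def by blast

lemma robber_moves_alive_subset: "robber_moves V adj rs rs' \<Longrightarrow> alive rs' \<subseteq> alive rs"
  unfolding alive_def robber_moves_def by auto

lemma robber_moves_occupied_subset: "robber_moves V adj rs rs' \<Longrightarrow> occupied rs' \<subseteq> V"
  unfolding occupied_def robber_moves_def by (force simp: in_set_conv_nth)

lemma robber_moves_stay: "\<forall>x\<in>V. adj x x \<Longrightarrow> occupied rs \<subseteq> V \<Longrightarrow> robber_moves V adj rs rs"
  unfolding robber_moves_def occupied_def by (force simp: in_set_conv_nth)

lemma alive_after_round:
  assumes "robber_moves V adj (capture c rs) rs'"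
  shows "alive (capture c' rs') \<subseteq> alive rs"
  using alive_capture_subset[of c' rs'] robber_moves_alive_subset[OF assms] alive_capture_subset[of c rs]
  by blast

lemma cop_wins_within_two_moves:
  assumes "c1 \<in> V" "adj c c1" "c2 \<in> V" "adj c1 c2"
    and "\<And>rs1 rs2. robber_moves V adj (capture c1 rs) rs1 \<Longrightarrow>
           robber_moves V adj (capture c2 (capture c1 rs1)) rs2 \<Longrightarrow>
           cop_wins_within V adj j c2 (capture c2 rs2)"
  shows "cop_wins_within V adj (Suc (Suc j)) c rs"
  using assms by (simp only: cop_wins_within.simps) blast

lemma cop_wins_within_lazy_robbers:
  assumes wins: "cop_wins_within V adj (Suc j) c rs" and not_caught: "alive rs \<noteq> {}"
    and refl: "\<forall>x\<in>V. adj x x" and rs_V: "occupied rs \<subseteq> V"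
  obtains c' where "c' \<in> V" "adj c c'" "cop_wins_within V adj j c' (capture c' rs)"
proof -
  from wins not_caught obtain c' where c': "c' \<in> V" "adj c c'"
    and W: "\<And>rs'. robber_moves V adj (capture c' rs) rs' \<Longrightarrow> cop_wins_within V adj j c' (capture c' rs')"
    by (auto simp: alive_empty_iff)
  have "robber_moves V adj (capture c' rs) (capture c' rs)"
    using refl rs_V by (intro robber_moves_stay) auto
  then show thesis
    using that c' W by fastforce
qed

lemma tstar_adj_refl: "tstar_adj n x x"
  by (simp add: tstar_adj_def)

lemma tstar_adj_from_tip: "n < x \<Longrightarrow> tstar_adj n x y \<Longrightarrow> y = x \<or> y + n = x"
  unfolding tstar_adj_def by auto

lemma tstar_adj_to_tip: "tstar_adj n c c' \<Longrightarrow> n < c' \<Longrightarrow> c \<noteq> c' \<Longrightarrow> c' = c + n \<and> 1 \<le> c \<and> c \<le> n"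
  unfolding tstar_adj_def by auto

lemma tstar_clear_branch:
  assumes rs_V: "occupied rs \<subseteq> tstar_V n - {0}" and not_caught: "alive rs \<noteq> {}"
    and cont: "\<And>b s. 1 \<le> b \<Longrightarrow> b \<le> n \<Longrightarrow> card (alive s) < card (alive rs) \<Longrightarrow>
                 cop_wins_within (tstar_V n) (tstar_adj n) j (b + n) s"
  shows "cop_wins_within (tstar_V n) (tstar_adj n) (Suc (Suc j)) 0 rs"
proof -
  obtain i x where i: "i < length rs" "rs ! i = Some x"
    using not_caught unfolding alive_def by auto
  have "x \<in> tstar_V n - {0}"
    using rs_V i unfolding occupied_def by (auto simp: in_set_conv_nth)
  moreover define b where "b = (if x \<le> n then x else x - n)"
  ultimately have b: "1 \<le> b" "b \<le> n" "x = b \<or> x = b + n"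
    unfolding tstar_V_def by auto
  show ?thesis
  proof (rule cop_wins_within_two_moves)
    fix rs1 rs2
    assume rm1: "robber_moves (tstar_V n) (tstar_adj n) (capture b rs) rs1"
      and rm2: "robber_moves (tstar_V n) (tstar_adj n) (capture (b + n) (capture b rs1)) rs2"
    have len: "length rs1 = length rs"
      using robber_moves_length[OF rm1] by simp
    have "capture (b + n) (capture b rs1) ! i = None"
    proof (cases "x = b")
      case True
      then show ?thesis
        using i len robber_moves_None[OF rm1, of i] by (simp add: nth_capture)
    next
      case False
      then have "capture b rs ! i = Some (b + n)"
        using i b by (simp add: nth_capture)
      then obtain y where y: "tstar_adj n (b + n) y" "rs1 ! i = Some y"
        using robber_movesD[OF rm1, of i] i by auto
      then have "y = b + n \<or> y = b"
        using tstar_adj_from_tip[of n "b + n" y] b(1) by auto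
      then show ?thesis
        using i len y(2) by (auto simp: nth_capture)
    qed
    then have "i \<notin> alive (capture (b + n) rs2)"
      using robber_moves_None[OF rm2, of i] i len unfolding alive_def by (auto simp: nth_capture)
    moreover have "i \<in> alive rs"
      using i unfolding alive_def by simp
    ultimately have "alive (capture (b + n) rs2) \<subset> alive rs"
      using alive_after_round[OF rm2] alive_after_round[OF rm1] by blast
    then show "cop_wins_within (tstar_V n) (tstar_adj n) j (b + n) (capture (b + n) rs2)"
      using b finite_alive by (intro cont) (auto intro: psubset_card_mono)
  qed (use b in \<open>auto simp: tstar_V_def tstar_adj_def\<close>)
qed

lemma tstar_return_to_centre:
  assumes b: "1 \<le> b" "b \<le> n"
    and cont: "\<And>s. occupied s \<subseteq> tstar_V n - {0} \<Longrightarrow> card (alive s) \<le> card (alive rs) \<Longrightarrow>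
                 cop_wins_within (tstar_V n) (tstar_adj n) j 0 s"
  shows "cop_wins_within (tstar_V n) (tstar_adj n) (Suc (Suc j)) (b + n) rs"
proof (rule cop_wins_within_two_moves)
  fix rs1 rs2
  assume rm1: "robber_moves (tstar_V n) (tstar_adj n) (capture b rs) rs1"
    and rm2: "robber_moves (tstar_V n) (tstar_adj n) (capture 0 (capture b rs1)) rs2"
  have "card (alive (capture 0 rs2)) \<le> card (alive rs)"
    using alive_after_round[OF rm2] alive_after_round[OF rm1] finite_alive by (meson card_mono order_trans)
  moreover have "occupied (capture 0 rs2) \<subseteq> tstar_V n - {0}"
    using robber_moves_occupied_subset[OF rm2] by auto
  ultimately show "cop_wins_within (tstar_V n) (tstar_adj n) j 0 (capture 0 rs2)"
    by (rule cont[rotated])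
qed (use b in \<open>auto simp: tstar_V_def tstar_adj_def\<close>)

lemma tstar_cop_wins_from_centre:
  assumes "occupied rs \<subseteq> tstar_V n - {0}" "card (alive rs) \<le> Suc k"
  shows "cop_wins_within (tstar_V n) (tstar_adj n) (4 * k + 2) 0 rs"
  using assms
proof (induction k arbitrary: rs)
  case 0
  show ?case
  proof (cases "alive rs = {}")
    case False
    have "cop_wins_within (tstar_V n) (tstar_adj n) (Suc (Suc 0)) 0 rs"
    proof (rule tstar_clear_branch[OF "0.prems"(1) False])
      fix b and s :: "nat option list"
      assume "card (alive s) < card (alive rs)"
      then have "card (alive s) = 0"
        using "0.prems"(2) by simp
      then have "alive s = {}"
        using finite_alive[of s] by simp
      then show "cop_wins_within (tstar_V n) (tstar_adj n) 0 (b + n) s"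
        by (simp add: alive_empty_iff)
    qed
    then show ?thesis by simp
  qed (simp add: alive_empty_iff cop_wins_within_all_captured)
next
  case (Suc k)
  show ?case
  proof (cases "alive rs = {}")
    case False
    have "cop_wins_within (tstar_V n) (tstar_adj n) (Suc (Suc (Suc (Suc (4 * k + 2))))) 0 rs"
    proof (rule tstar_clear_branch[OF Suc.prems(1) False])
      fix b and s :: "nat option list"
      assume "1 \<le> b" "b \<le> n" "card (alive s) < card (alive rs)"
      then show "cop_wins_within (tstar_V n) (tstar_adj n) (Suc (Suc (4 * k + 2))) (b + n) s"
        using Suc.IH Suc.prems(2) by (intro tstar_return_to_centre) auto
    qed
    then show ?thesis by (simp add: numeral_eq_Suc)
  qed (simp add: alive_empty_iff cop_wins_within_all_captured)
qed

lemma tstar_capt_by: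
  assumes "1 \<le> m"
  shows "capt_by (tstar_V n) (tstar_adj n) m (4 * m - 2)"
  unfolding capt_by_def
proof (intro bexI allI impI)
  fix rs :: "nat list"
  assume rs: "length rs = m \<and> set rs \<subseteq> tstar_V n"
  have "occupied (capture 0 (map Some rs)) \<subseteq> tstar_V n - {0}"
    using rs by auto
  moreover have "card (alive (capture 0 (map Some rs))) \<le> Suc (m - 1)"
    using card_alive_le_length[of "capture 0 (map Some rs)"] rs assms by simp
  moreover have "4 * m - 2 = 4 * (m - 1) + 2"
    using assms by simp
  ultimately show "cop_wins_within (tstar_V n) (tstar_adj n) (4 * m - 2) 0 (capture 0 (map Some rs))"
    using tstar_cop_wins_from_centre by metis
qed (simp add: tstar_V_def)

(* The distance in T_n from c to the nearest vertex of P, for P a nonempty set of tips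
   (vertices above n) with c \<notin> P. *)
definition dist_to_tips :: "nat \<Rightarrow> nat \<Rightarrow> nat set \<Rightarrow> nat" where
  "dist_to_tips n c P = (if c = 0 then 2 else if c \<le> n then (if c + n \<in> P then 1 else 3) else 4)"

lemma dist_to_tips_adj:
  assumes "tstar_adj n c c'" "c \<notin> P" "c' \<notin> P"
  shows "dist_to_tips n c P \<le> dist_to_tips n c' P + 1"
  using assms unfolding tstar_adj_def dist_to_tips_def by auto

lemma tstar_capture_time_ge:
  assumes "cop_wins_within (tstar_V n) (tstar_adj n) j c rs" "occupied rs \<subseteq> {n<..2 * n}"
    and "c \<notin> occupied rs" "occupied rs \<noteq> {}"
  shows "4 * (card (occupied rs) - 1) + dist_to_tips n c (occupied rs) \<le> j"
  using assms
proof (induction j arbitrary: c rs)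
  case 0
  then show ?case by (auto simp: occupied_def)
next
  case (Suc j)
  let ?P = "occupied rs"
  have "alive rs \<noteq> {}" "occupied rs \<subseteq> tstar_V n"
    using Suc.prems(2,4) by (auto simp: alive_empty_iff occupied_def tstar_V_def)
  then obtain c' where c': "tstar_adj n c c'"
    and wins: "cop_wins_within (tstar_V n) (tstar_adj n) j c' (capture c' rs)"
    using Suc.prems(1) tstar_adj_refl by (blast elim: cop_wins_within_lazy_robbers)
  have fin: "finite ?P"
    using Suc.prems(2) finite_subset by blast
  have IH: "?P - {c'} \<noteq> {} \<Longrightarrow> 4 * (card (?P - {c'}) - 1) + dist_to_tips n c' (?P - {c'}) \<le> j"
    using Suc.IH[OF wins] Suc.prems(2) by auto
  show ?case
  proof (cases "c' \<in> ?P")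
    case True
    then have "c' = c + n" "1 \<le> c" "c \<le> n"
      using tstar_adj_to_tip[OF c'] Suc.prems(2,3) by fastforce+
    then have dist_c: "dist_to_tips n c ?P = 1"
      using True by (simp add: dist_to_tips_def)
    show ?thesis
    proof (cases "?P = {c'}")
      case False
      then have rest: "?P - {c'} \<noteq> {}"
        using True by auto
      then have "card (?P - {c'}) \<ge> 1"
        using fin by (simp add: Suc_le_eq card_gt_0_iff)
      moreover have "card (?P - {c'}) = card ?P - 1"
        using True by (simp add: card_Diff_singleton)
      moreover have "dist_to_tips n c' (?P - {c'}) = 4"
        using True Suc.prems(2) by (auto simp: dist_to_tips_def)
      ultimately show ?thesis
        using IH[OF rest] dist_c by linarith
    next
      case True
      then have "card ?P = 1"
        by simp
      then show ?thesis
        using dist_c by simp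
    qed
  next
    case False
    then have "?P - {c'} = ?P"
      by simp
    then show ?thesis
      using IH Suc.prems(3,4) dist_to_tips_adj[OF c' Suc.prems(3) False] by simp
  qed
qed

lemma tstar_not_capt_by:
  assumes "1 \<le> m" "m < n" "k < 4 * m - 2"
  shows "\<not> capt_by (tstar_V n) (tstar_adj n) m k"
proof
  assume "capt_by (tstar_V n) (tstar_adj n) m k"
  then obtain c where c: "c \<in> tstar_V n"
    and wins: "\<And>rs. length rs = m \<Longrightarrow> set rs \<subseteq> tstar_V n \<Longrightarrow>
                 cop_wins_within (tstar_V n) (tstar_adj n) k c (capture c (map Some rs))"
    unfolding capt_by_def by blast
  define home where "home = (if c = 0 then 2 * n else if c \<le> n then c + n else c)"
  have "home \<in> {n<..2 * n}"
    using c assms(2) unfolding home_def tstar_V_def by auto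
  then have "m \<le> card ({n<..2 * n} - {home})"
    using assms(2) by simp
  then obtain P where P: "P \<subseteq> {n<..2 * n} - {home}" "card P = m" "finite P"
    by (rule obtain_subset_with_card_n)
  then obtain rs where rs: "set rs = P" "distinct rs"
    using finite_distinct_list by blast
  have "c \<notin> P"
    using P(1) c unfolding home_def tstar_V_def by auto
  have "P \<subseteq> tstar_V n" "P \<noteq> {}"
    using P assms(1) unfolding tstar_V_def by auto
  moreover have "length rs = m"
    using rs P(2) distinct_card by fastforce
  ultimately have "cop_wins_within (tstar_V n) (tstar_adj n) k c (map Some rs)"
    using wins rs \<open>c \<notin> P\<close> capture_map_Some by metis
  then have "4 * (m - 1) + dist_to_tips n c P \<le> k"
    using tstar_capture_time_ge P \<open>c \<notin> P\<close> \<open>P \<noteq> {}\<close> rs by fastforce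
  moreover have "dist_to_tips n c P \<ge> 2"
    using P(1) unfolding dist_to_tips_def home_def by auto
  ultimately show False
    using assms by linarith
qed

theorem mainTheorem10:
  fixes m :: nat
  assumes "m \<ge> 1"
  shows "capt (tstar_V (m + 1)) (tstar_adj (m + 1)) m = 4 * m - 2"
  unfolding capt_def
proof (rule Least_equality)
  show "capt_by (tstar_V (m + 1)) (tstar_adj (m + 1)) m (4 * m - 2)"
    using assms by (rule tstar_capt_by)
next
  fix k assume "capt_by (tstar_V (m + 1)) (tstar_adj (m + 1)) m k"
  then show "4 * m - 2 \<le> k"
    using tstar_not_capt_by[of m "m + 1" k] assms by fastforce
qed

end
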